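(* Let $q$ be a prime power, $m\ge2$, and $\Phi(x)=\sum_{i=0}^{2m}c_ix^{q^i}\in\mathbb{F}_q[x]$ with $c_{2m}=1$, $c_i=-c_{2m-i}$ for $0\le i\le m$, and $c_m=0$. Let $L(x)=\Phi(x)+t^qx^{q^{m+1}}-tx^{q^{m-1}}\in\mathbb{F}_q(t)[x]$ and let $f\in\mathbb{F}_q[x]$ be the monic polynomial with $f(0)=0$ and $f^q-f=x^{q^m}\Phi$. Then \[L(x)=x^{-q^m}\prod_{\lambda\in\mathbb{F}_q}\bigl(tx^{q^m+q^{m-1}}+f(x)+\lambda\bigr).\] Consequently $L(x)/x$ has exactly $q$ different irreducible factors over $\mathbb{F}_q(t)$: one of degree $(q^{m-1}-1)(q^m+1)$ and $q-1$ of degree $q^{m-1}(q^m+1)$. *)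

theory Defs
  imports "HOL-Library.Cardinality" "HOL-Computational_Algebra.Polynomial" "HOL-Computational_Algebra.Fraction_Field"
begin

text \<open>F_q is a finite field type 'a (q = CARD('a)); F_q(t) is the fraction field
  of 'a poly, i.e. the type ('a poly) fract, with t the image of the variable.\<close>

definition const_emb :: "'a::field \<Rightarrow> 'a poly fract" where
  "const_emb c = Fract [:c:] 1"

definition tvar :: "'a::field poly fract" where
  "tvar = Fract [:0, 1:] 1"

definition Phi :: "nat \<Rightarrow> (nat \<Rightarrow> 'a::{finite,field}) \<Rightarrow> 'a poly" where
  "Phi m c = (\<Sum>i = 0..2*m. monom (c i) (CARD('a) ^ i))"

definition Lpoly :: "nat \<Rightarrow> (nat \<Rightarrow> 'a::{finite,field}) \<Rightarrow> 'a poly fract poly" where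
  "Lpoly m c = map_poly const_emb (Phi m c)
      + monom (tvar ^ CARD('a)) (CARD('a) ^ (m + 1))
      - monom tvar (CARD('a) ^ (m - 1))"

end

(*
  Write q = CARD('a), N = q^m + q^(m-1) and G = t x^N + f.  In every F_q-algebra the product of
  all Y + l (l in F_q) equals Y^q - Y, and u -> u^q is additive.  Hence the product of the G + l
  is G^q - G = t^q x^(qN) - t x^N + (f^q - f), which by the defining equation of f is x^(q^m) L.

  Comparing lowest and highest terms in f^q - f = x^(q^m) Phi gives deg f = q^(m-1) (q^m + 1),
  x^(q^m+1) | f, and -c_0 = 1 as the coefficient of x^(q^m+1) in f.  So G = x^(q^m+1) H with
  H = t x^(q^(m-1)-1) + f_1 and f_1(0) = 1, while G + l has constant term l for l /= 0.  Every
  one of these factors has the form t x^k + B(x) with B(0) /= 0 and k < deg B.  Being linear in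
  t with coprime coefficients x^k and B, it is irreducible over F_q(t) by Gauss's lemma.  Thus
  L / x is the product of the q distinct monic irreducible polynomials H and G + l (l /= 0).
*)
theory Submission
  imports Defs "HOL-Computational_Algebra.Polynomial_Factorial"
begin

section \<open>Ring homomorphisms\<close>

locale comm_ring_hom =
  fixes h :: "'a::comm_ring_1 \<Rightarrow> 'b::comm_ring_1"
  assumes hom_add: "h (a + b) = h a + h b"
    and hom_mult: "h (a * b) = h a * h b"
    and hom_one [simp]: "h 1 = 1"
begin

lemma hom_zero [simp]: "h 0 = 0"
  using hom_add[of 0 0] by simp

lemma hom_uminus: "h (- a) = - h a"
  using hom_add[of a "- a"] by (simp add: neg_eq_iff_add_eq_0 eq_commute[of "h (- a)"])

lemma hom_diff: "h (a - b) = h a - h b"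
  using hom_add[of a "- b"] by (simp add: hom_uminus)

lemma hom_of_nat: "h (of_nat n) = of_nat n"
  by (induction n) (simp_all add: hom_add)

lemma hom_power: "h (a ^ n) = h a ^ n"
  by (induction n) (simp_all add: hom_mult)

lemma hom_sum: "h (\<Sum>x\<in>A. g x) = (\<Sum>x\<in>A. h (g x))"
  by (induction A rule: infinite_finite_induct) (simp_all add: hom_add)

lemma hom_prod: "h (\<Prod>x\<in>A. g x) = (\<Prod>x\<in>A. h (g x))"
  by (induction A rule: infinite_finite_induct) (simp_all add: hom_mult)

lemma hom_dvd: "a dvd b \<Longrightarrow> h a dvd h b"
  by (auto simp: dvd_def hom_mult)

lemma irreducible_if_irreducible_hom:
  assumes reflect: "\<And>x. h x dvd 1 \<Longrightarrow> x dvd 1" and irr: "irreducible (h p)"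
  shows "irreducible p"
proof (rule irreducibleI)
  show "p \<noteq> 0"
    using irr by (auto simp: irreducible_def)
  show "\<not> p dvd 1"
    using irr hom_dvd[of p 1] by (auto simp: irreducible_def)
  fix a b assume "p = a * b"
  then have "h p = h a * h b"
    by (simp add: hom_mult)
  then show "a dvd 1 \<or> b dvd 1"
    using irr reflect by (auto dest: irreducibleD)
qed

lemma map_poly_hom_add: "map_poly h (p + q) = map_poly h p + map_poly h q"
  by (rule poly_eqI) (simp add: coeff_map_poly hom_add)

lemma map_poly_hom_mult: "map_poly h (p * q) = map_poly h p * map_poly h q"
  by (rule poly_eqI) (simp add: coeff_map_poly coeff_mult hom_sum hom_mult)

lemma comm_ring_hom_map_poly: "comm_ring_hom (map_poly h)"
  by unfold_locales (simp_all add: map_poly_hom_add map_poly_hom_mult)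

end

lemma comm_ring_hom_comp: "comm_ring_hom g \<Longrightarrow> comm_ring_hom h \<Longrightarrow> comm_ring_hom (g \<circ> h)"
  by (simp add: comm_ring_hom_def)

lemma comm_ring_hom_poly: "comm_ring_hom (\<lambda>p. poly p a)"
  by unfold_locales simp_all

lemma comm_ring_hom_const_poly: "comm_ring_hom (\<lambda>a. [:a:])"
  by unfold_locales (simp_all add: one_pCons)

locale inj_idom_hom = comm_ring_hom h for h :: "'a::idom \<Rightarrow> 'b::idom" +
  assumes kernel_trivial: "h a = 0 \<Longrightarrow> a = 0"
begin

lemma hom_eq_0_iff [simp]: "h a = 0 \<longleftrightarrow> a = 0"
  using kernel_trivial by auto

lemma hom_eq_iff [simp]: "h a = h b \<longleftrightarrow> a = b"
  using hom_eq_0_iff[of "a - b"] by (simp add: hom_diff)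

lemma map_poly_hom_eq_0_iff [simp]: "map_poly h p = 0 \<longleftrightarrow> p = 0"
  by (simp add: map_poly_eq_0_iff)

lemma inj_idom_hom_map_poly: "inj_idom_hom (map_poly h)"
  by (intro inj_idom_hom.intro comm_ring_hom_map_poly) (simp add: inj_idom_hom_axioms_def)

end

text \<open>Independent of the chosen representation only for injective \<open>h\<close>, see \<open>map_fract_Fract\<close>.\<close>

definition map_fract :: "('a::idom \<Rightarrow> 'b::idom) \<Rightarrow> 'a fract \<Rightarrow> 'b fract" where
  "map_fract h x = (let (a, b) = (SOME (a, b). b \<noteq> 0 \<and> x = Fract a b) in Fract (h a) (h b))"

context inj_idom_hom
begin

lemma map_fract_Fract:
  assumes "b \<noteq> 0"
  shows "map_fract h (Fract a b) = Fract (h a) (h b)"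
proof -
  let ?P = "\<lambda>(a', b'). b' \<noteq> 0 \<and> Fract a b = Fract a' b'"
  obtain a' b' where rep: "(SOME r. ?P r) = (a', b')"
    by (cases "SOME r. ?P r")
  have "?P (a', b')"
    using someI[of ?P "(a, b)"] assms by (simp add: rep)
  then have "b' \<noteq> 0" "a * b' = a' * b"
    using assms eq_fract by auto
  then have "h a * h b' = h a' * h b" "h b' \<noteq> 0"
    by (simp_all flip: hom_mult)
  with assms show ?thesis
    unfolding map_fract_def by (simp add: rep eq_fract)
qed

lemma comm_ring_hom_map_fract: "comm_ring_hom (map_fract h)"
proof
  fix x y :: "'a fract"
  show "map_fract h (x + y) = map_fract h x + map_fract h y"
    by (cases x; cases y) (simp add: map_fract_Fract hom_add hom_mult)
  show "map_fract h (x * y) = map_fract h x * map_fract h y"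
    by (cases x; cases y) (simp add: map_fract_Fract hom_mult)
  show "map_fract h 1 = 1"
    by (simp add: One_fract_def map_fract_Fract)
qed

end

locale field_hom = comm_ring_hom h for h :: "'a::field \<Rightarrow> 'b::field"

sublocale field_hom \<subseteq> inj_idom_hom
proof
  fix a assume "h a = 0"
  then have "h (a * inverse a) = 0"
    by (simp add: hom_mult)
  then show "a = 0"
    by (cases "a = 0") simp_all
qed

context field_hom
begin

lemma degree_map_poly_hom [simp]: "degree (map_poly h p) = degree p"
  by (rule degree_map_poly) simp

lemma irreducible_if_irreducible_map_poly:
  assumes "irreducible (map_poly h p)"
  shows "irreducible p"
proof (rule comm_ring_hom.irreducible_if_irreducible_hom[OF comm_ring_hom_map_poly _ assms])
  fix x :: "'a poly" assume "map_poly h x dvd 1"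
  then show "x dvd 1"
    by (metis is_unit_iff_degree degree_map_poly_hom map_poly_hom_eq_0_iff not_is_unit_0)
qed

end

section \<open>Finite fields\<close>

text \<open>A copy of a field type carrying the trivial Euclidean structure.  Through it, Gauss's lemma
  (which needs gcds in the coefficient ring \<open>'a poly\<close>) and the library's class \<open>finite_field\<close>
  become available for an arbitrary field type \<open>'a\<close>.\<close>

typedef 'a gcd_field = "UNIV :: 'a::field set"
  morphisms from_gcd_field to_gcd_field
  by simp

setup_lifting type_definition_gcd_field

instantiation gcd_field :: (field) field
begin
lift_definition zero_gcd_field :: "'a gcd_field" is 0 .
lift_definition one_gcd_field :: "'a gcd_field" is 1 .
lift_definition plus_gcd_field :: "'a gcd_field \<Rightarrow> 'a gcd_field \<Rightarrow> 'a gcd_field" is "(+)" .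
lift_definition minus_gcd_field :: "'a gcd_field \<Rightarrow> 'a gcd_field \<Rightarrow> 'a gcd_field" is "(-)" .
lift_definition uminus_gcd_field :: "'a gcd_field \<Rightarrow> 'a gcd_field" is uminus .
lift_definition times_gcd_field :: "'a gcd_field \<Rightarrow> 'a gcd_field \<Rightarrow> 'a gcd_field" is "(*)" .
lift_definition inverse_gcd_field :: "'a gcd_field \<Rightarrow> 'a gcd_field" is inverse .
lift_definition divide_gcd_field :: "'a gcd_field \<Rightarrow> 'a gcd_field \<Rightarrow> 'a gcd_field" is "(/)" .
instance
  by standard (transfer; simp add: algebra_simps divide_inverse)+
end

instantiation gcd_field :: (field)
  "{unique_euclidean_ring, normalization_euclidean_semiring, normalization_semidom_multiplicative}"
begin
definition normalize_gcd_field :: "'a gcd_field \<Rightarrow> 'a gcd_field" where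
  "normalize_gcd_field x = (if x = 0 then 0 else 1)"
definition unit_factor_gcd_field :: "'a gcd_field \<Rightarrow> 'a gcd_field" where
  "unit_factor_gcd_field x = x"
definition modulo_gcd_field :: "'a gcd_field \<Rightarrow> 'a gcd_field \<Rightarrow> 'a gcd_field" where
  "modulo_gcd_field x y = (if y = 0 then x else 0)"
definition euclidean_size_gcd_field :: "'a gcd_field \<Rightarrow> nat" where
  "euclidean_size_gcd_field x = (if x = 0 then 0 else 1)"
definition division_segment_gcd_field :: "'a gcd_field \<Rightarrow> 'a gcd_field" where
  "division_segment_gcd_field x = 1"
instance
  by standard
    (simp_all add: normalize_gcd_field_def unit_factor_gcd_field_def modulo_gcd_field_def
      euclidean_size_gcd_field_def division_segment_gcd_field_def dvd_field_iff field_split_simps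
      split: if_splits)
end

instantiation gcd_field :: (field) euclidean_ring_gcd
begin
definition gcd_gcd_field :: "'a gcd_field \<Rightarrow> 'a gcd_field \<Rightarrow> 'a gcd_field" where
  "gcd_gcd_field = Euclidean_Algorithm.gcd"
definition lcm_gcd_field :: "'a gcd_field \<Rightarrow> 'a gcd_field \<Rightarrow> 'a gcd_field" where
  "lcm_gcd_field = Euclidean_Algorithm.lcm"
definition Gcd_gcd_field :: "'a gcd_field set \<Rightarrow> 'a gcd_field" where
  "Gcd_gcd_field = Euclidean_Algorithm.Gcd"
definition Lcm_gcd_field :: "'a gcd_field set \<Rightarrow> 'a gcd_field" where
  "Lcm_gcd_field = Euclidean_Algorithm.Lcm"
instance
  by standard (simp_all add: gcd_gcd_field_def lcm_gcd_field_def Gcd_gcd_field_def Lcm_gcd_field_def)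
end

instance gcd_field :: (field) field_gcd ..

instance gcd_field :: ("{finite,field}") finite
proof
  show "finite (UNIV :: 'a gcd_field set)"
    by (metis finite_imageI finite type_definition.Abs_image type_definition_gcd_field)
qed

instance gcd_field :: ("{finite,field}") finite_field
  by (rule finite_fieldI) simp

interpretation to_gcd_field: field_hom to_gcd_field
  by unfold_locales (simp_all add: plus_gcd_field_def times_gcd_field_def one_gcd_field_def to_gcd_field_inverse)

lemma card_gcd_field: "CARD('a gcd_field) = CARD('a::field)"
  by (rule type_definition.card[OF type_definition_gcd_field])

lemma power_card_eq_self: "x ^ CARD('a) = (x :: 'a::{finite,field})"
proof -
  have "to_gcd_field (x ^ CARD('a)) = to_gcd_field x"
    using finite_field_power_card_eq_same[of "to_gcd_field x"]
    by (simp add: to_gcd_field.hom_power card_gcd_field)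
  then show ?thesis
    by (simp add: to_gcd_field_inject)
qed

lemma two_le_card_field: "2 \<le> CARD('a::{finite,field})"
  using card_mono[of UNIV "{0, 1::'a}"] by simp

lemma prod_UNIV_linear_eq: "(\<Prod>l\<in>UNIV. [:l, 1:]) = monom 1 CARD('a) - [:0, 1::'a::{finite,field}:]"
proof -
  let ?D = "(\<Prod>l\<in>UNIV. [:l, 1:]) - (monom 1 CARD('a) - [:0, 1::'a:])"
  have q: "2 \<le> CARD('a)"
    by (rule two_le_card_field)
  have "coeff ?D n = 0" if "CARD('a) \<le> n" for n
  proof -
    have deg: "degree (\<Prod>l\<in>UNIV. [:l, 1::'a:]) = CARD('a)"
      by (simp add: degree_prod_eq_sum_degree)
    moreover have "coeff (\<Prod>l\<in>UNIV. [:l, 1::'a:]) CARD('a) = 1"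
      using lead_coeff_prod[of "\<lambda>l. [:l, 1::'a:]" UNIV] by (simp add: deg)
    ultimately show ?thesis
      using that q by (cases "n = CARD('a)") (auto simp: coeff_eq_0 coeff_pCons split: nat.split)
  qed
  then have "degree ?D \<le> CARD('a) - 1"
    using q by (intro degree_le) simp
  moreover have "poly ?D x = 0" for x
  proof -
    have "poly (\<Prod>l\<in>UNIV. [:l, 1:]) x = 0"
      by (auto simp: poly_prod prod_zero_iff intro: exI[of _ "- x"])
    then show ?thesis
      by (simp add: poly_monom power_card_eq_self)
  qed
  ultimately have "?D = 0"
    using card_poly_roots_bound[of ?D] q by (cases "?D = 0") auto
  then show ?thesis
    by simp
qed

locale finite_field_algebra = comm_ring_hom h for h :: "'a::{finite,field} \<Rightarrow> 'b::comm_ring_1"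
begin

lemma prod_UNIV_plus_hom: "(\<Prod>l\<in>UNIV. y + h l) = y ^ CARD('a) - y"
proof -
  interpret eval: comm_ring_hom "\<lambda>p. poly (map_poly h p) y"
    using comm_ring_hom_comp[OF comm_ring_hom_poly comm_ring_hom_map_poly] by (simp add: o_def)
  have "(\<Prod>l\<in>UNIV. y + h l) = poly (map_poly h (\<Prod>l\<in>UNIV. [:l, 1:])) y"
    by (simp add: eval.hom_prod map_poly_pCons add.commute)
  also have "\<dots> = y ^ CARD('a) - y"
    by (simp add: prod_UNIV_linear_eq eval.hom_diff map_poly_monom map_poly_pCons poly_monom)
  finally show ?thesis .
qed

end

interpretation const_poly: finite_field_algebra "\<lambda>a::'a::{finite,field}. [:a:]"
  by (rule finite_field_algebra.intro[OF comm_ring_hom_const_poly])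

text \<open>Both \<open>(X + 1)^q - (X + 1)\<close> and \<open>X^q - X\<close> are the product of all \<open>X + l\<close>.\<close>

lemma of_nat_card_choose_eq_0:
  assumes "0 < k" "k < CARD('a)"
  shows "of_nat (CARD('a) choose k) = (0::'a::{finite,field})"
proof -
  have "[:1, 1:] ^ CARD('a) - [:1, 1:] = (\<Prod>l\<in>UNIV. [:1, 1:] + [:l::'a:])"
    by (rule const_poly.prod_UNIV_plus_hom[symmetric])
  also have "\<dots> = (\<Prod>l\<in>UNIV. [:l + 1, 1:])"
    by (simp add: add.commute)
  also have "\<dots> = (\<Prod>l\<in>UNIV. [:l, 1:])"
    by (rule prod.reindex_bij_witness[of _ "\<lambda>l. l - 1" "\<lambda>l. l + 1"]) auto
  also have "\<dots> = monom 1 CARD('a) - [:0, 1:]"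
    by (rule prod_UNIV_linear_eq)
  finally have "coeff ([:1, 1:] ^ CARD('a) - [:1, 1:]) k = coeff (monom 1 CARD('a) - [:0, 1::'a:]) k"
    by (rule arg_cong)
  moreover have "coeff [:1, 1::'a:] k = coeff [:0, 1:] k"
    using \<open>0 < k\<close> by (cases k) simp_all
  ultimately have "coeff ([:1, 1::'a:] ^ CARD('a)) k = 0"
    using assms by simp
  then show ?thesis
    using coeff_linear_poly_power[of k "CARD('a)" 1 "1::'a"] assms by simp
qed

context finite_field_algebra
begin

lemma add_power_card: "(u + v :: 'b) ^ CARD('a) = u ^ CARD('a) + v ^ CARD('a)"
proof -
  have "(u + v) ^ CARD('a) = (\<Sum>k\<le>CARD('a). of_nat (CARD('a) choose k) * u ^ k * v ^ (CARD('a) - k))"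
    by (rule binomial_ring)
  also have "\<dots> = (\<Sum>k\<in>{0, CARD('a)}. of_nat (CARD('a) choose k) * u ^ k * v ^ (CARD('a) - k))"
  proof (rule sum.mono_neutral_right)
    show "\<forall>k\<in>{..CARD('a)} - {0, CARD('a)}. of_nat (CARD('a) choose k) * u ^ k * v ^ (CARD('a) - k) = 0"
      using of_nat_card_choose_eq_0[where 'a='a] by (auto simp flip: hom_of_nat)
  qed auto
  finally show ?thesis
    by (simp add: add.commute)
qed

end

section \<open>Polynomials linear in t\<close>

interpretation const_emb: field_hom const_emb
  by unfold_locales (simp_all add: const_emb_def mult.commute flip: One_fract_def one_pCons)

definition swap_vars :: "'a::comm_ring_1 poly poly \<Rightarrow> 'a poly poly" where
  "swap_vars p = poly (map_poly (map_poly (\<lambda>c. [:c:])) p) [:[:0, 1:]:]"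

lemma coeff_swap_vars: "coeff (coeff (swap_vars p) i) j = coeff (coeff p j) i"
proof -
  have X_power: "[:[:0, 1::'a:]:] ^ k = [:monom 1 k:]" for k
    by (simp add: poly_const_pow monom_altdef)
  have "coeff (coeff (swap_vars p) i) j = (\<Sum>k\<le>degree p. coeff (coeff p k) i * (if k = j then 1 else 0))"
    unfolding swap_vars_def poly_altdef
    by (simp add: degree_map_poly map_poly_eq_0_iff coeff_sum coeff_map_poly X_power
        mult.commute[of _ "[:monom 1 _:]"])
  also have "\<dots> = coeff (coeff p j) i"
    by (cases "j \<le> degree p") (simp_all add: coeff_eq_0 if_distrib[of "(*) _"] cong: if_cong)
  finally show ?thesis .
qed

lemma swap_vars_swap_vars [simp]: "swap_vars (swap_vars p) = p"
  by (intro poly_eqI) (simp add: poly_eq_iff coeff_swap_vars)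

lemma comm_ring_hom_swap_vars: "comm_ring_hom swap_vars"
  unfolding swap_vars_def[abs_def]
  using comm_ring_hom_comp[OF comm_ring_hom_poly[of "[:[:0, 1:]:]"]
      comm_ring_hom.comm_ring_hom_map_poly[OF comm_ring_hom.comm_ring_hom_map_poly[OF comm_ring_hom_const_poly]]]
  by (simp add: o_def)

lemma irreducible_if_irreducible_swap_vars: "irreducible (swap_vars p) \<Longrightarrow> irreducible p"
  by (rule comm_ring_hom.irreducible_if_irreducible_hom[OF comm_ring_hom_swap_vars])
    (metis comm_ring_hom.hom_dvd[OF comm_ring_hom_swap_vars] comm_ring_hom.hom_one[OF comm_ring_hom_swap_vars]
      swap_vars_swap_vars)

lemma coprime_monom_if_coeff_0:
  fixes B :: "'a::field_gcd poly"
  assumes "coeff B 0 \<noteq> 0"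
  shows "coprime B (monom 1 k)"
proof -
  have "prime_elem [:0, 1::'a:]"
    by (rule prime_elem_linear_field_poly) simp
  moreover have "\<not> [:0, 1:] dvd B"
    using assms by (simp add: dvd_iff_poly_eq_0 poly_0_coeff_0)
  ultimately have "coprime [:0, 1:] B"
    by (rule prime_elem_imp_coprime)
  then show ?thesis
    by (simp add: monom_altdef coprime_commute)
qed

lemma const_emb_conv_to_fract: "const_emb = to_fract \<circ> (\<lambda>c. [:c:])"
  by (simp add: fun_eq_iff const_emb_def to_fract_def)

lemma tvar_conv_to_fract: "tvar = to_fract [:0, 1:]"
  by (simp add: tvar_def to_fract_def)

text \<open>Read in \<open>(F[t])[x]\<close>, the polynomial is the variable swap of the linear polynomial
  \<open>[:B, A:]\<close> in \<open>(F[x])[t]\<close>, irreducible as \<open>A\<close> and \<open>B\<close> are coprime; Gauss's lemma passes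
  to the fraction field \<open>F(t)\<close>.\<close>

lemma irreducible_linear_in_t:
  fixes A B :: "'a::field_gcd poly"
  assumes "A \<noteq> 0" "coprime B A"
    and deg: "degree (smult tvar (map_poly const_emb A) + map_poly const_emb B) \<noteq> 0"
  shows "irreducible (smult tvar (map_poly const_emb A) + map_poly const_emb B)"
proof -
  define W where "W = smult [:0, 1:] (map_poly (\<lambda>c. [:c:]) A) + map_poly (\<lambda>c. [:c:]) B"
  have "swap_vars W = [:B, A:]"
    by (intro poly_eqI) (simp add: poly_eq_iff coeff_swap_vars W_def coeff_map_poly coeff_pCons split: nat.split)
  then have "irreducible W"
    using irreducible_linear_poly[of A B] assms irreducible_if_irreducible_swap_vars by metis
  moreover have fract_W: "fract_poly W = smult tvar (map_poly const_emb A) + map_poly const_emb B"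
    unfolding W_def
    by (simp add: map_poly_map_poly const_emb_conv_to_fract tvar_conv_to_fract)
  moreover have "degree W \<noteq> 0"
    using deg by (simp add: degree_map_poly flip: fract_W)
  ultimately show ?thesis
    using nonconst_poly_irreducible_iff by metis
qed

definition t_monom_plus :: "nat \<Rightarrow> 'a::field poly \<Rightarrow> 'a poly fract poly" where
  "t_monom_plus k B = monom tvar k + map_poly const_emb B"

lemma
  assumes "k < degree B"
  shows degree_t_monom_plus: "degree (t_monom_plus k B) = degree B"
    and lead_coeff_t_monom_plus: "lead_coeff (t_monom_plus k B) = const_emb (lead_coeff B)"
proof -
  have lt: "degree (monom tvar k) < degree (map_poly const_emb B)"
    using le_less_trans[OF degree_monom_le assms] by simp
  show "degree (t_monom_plus k B) = degree B"
    using degree_add_eq_right[OF lt] by (simp add: t_monom_plus_def)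
  show "lead_coeff (t_monom_plus k B) = const_emb (lead_coeff B)"
    using lead_coeff_add_le[OF lt] by (simp add: t_monom_plus_def coeff_map_poly)
qed

lemma coeff_0_t_monom_plus: "0 < k \<Longrightarrow> coeff (t_monom_plus k B) 0 = const_emb (coeff B 0)"
  by (simp add: t_monom_plus_def coeff_map_poly)

lemma monom_mult_t_monom_plus: "monom 1 j * t_monom_plus k B = t_monom_plus (j + k) (monom 1 j * B)"
  by (simp add: t_monom_plus_def algebra_simps mult_monom const_emb.map_poly_hom_mult map_poly_monom)

lemma irreducible_t_monom_plus:
  fixes B :: "'a::field poly"
  assumes "coeff B 0 \<noteq> 0" and "k < degree B"
  shows "irreducible (t_monom_plus k B)"
proof -
  interpret to_gcd_field_poly: inj_idom_hom "map_poly to_gcd_field"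
    by (rule to_gcd_field.inj_idom_hom_map_poly)
  let ?\<psi> = "map_fract (map_poly to_gcd_field)"
  interpret \<psi>: field_hom ?\<psi>
    using to_gcd_field_poly.comm_ring_hom_map_fract by (simp add: field_hom_def)
  have \<psi>_const: "?\<psi> (const_emb c) = const_emb (to_gcd_field c)" for c :: 'a
    by (simp add: const_emb_def to_gcd_field_poly.map_fract_Fract map_poly_pCons)
  have \<psi>_t: "?\<psi> tvar = tvar"
    by (simp add: tvar_def to_gcd_field_poly.map_fract_Fract map_poly_pCons)
  define B' where "B' = map_poly to_gcd_field B"
  have image: "map_poly ?\<psi> (t_monom_plus k B)
      = smult tvar (map_poly const_emb (monom 1 k)) + map_poly const_emb B'"
    by (simp add: t_monom_plus_def \<psi>.map_poly_hom_add map_poly_monom map_poly_map_poly o_def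
        \<psi>_const \<psi>_t B'_def smult_monom)
  have "irreducible (smult tvar (map_poly const_emb (monom 1 k)) + map_poly const_emb B')"
  proof (rule irreducible_linear_in_t)
    show "coprime B' (monom 1 k)"
      using assms(1) by (intro coprime_monom_if_coeff_0) (simp add: B'_def coeff_map_poly)
    show "degree (smult tvar (map_poly const_emb (monom 1 k)) + map_poly const_emb B') \<noteq> 0"
      using assms(2) by (simp flip: image add: degree_t_monom_plus)
  qed simp
  then show ?thesis
    using \<psi>.irreducible_if_irreducible_map_poly image by metis
qed

lemma monic_irreducible_t_monom_plus:
  fixes B :: "'a::field poly"
  assumes "coeff B 0 \<noteq> 0" "k < degree B" "lead_coeff B = 1"
  shows "irreducible (t_monom_plus k B)" "lead_coeff (t_monom_plus k B) = 1"
    "degree (t_monom_plus k B) = degree B"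
  using assms irreducible_t_monom_plus degree_t_monom_plus lead_coeff_t_monom_plus[OF assms(2)]
  by simp_all

section \<open>The polynomial f\<close>

lemma coeff_power_eq_0_below:
  fixes p :: "'a::comm_semiring_1 poly"
  assumes "monom 1 k dvd p" "j < k * n"
  shows "coeff (p ^ n) j = 0"
proof -
  have "monom 1 (k * n) dvd p ^ n"
    using dvd_power_same[OF assms(1), of n] by (simp add: monom_power)
  then show ?thesis
    using assms(2) by (simp add: monom_1_dvd_iff')
qed

lemma coeff_power_minus_self:
  fixes f :: "'a::comm_ring_1 poly"
  assumes "monom 1 k dvd f" "0 < k" "2 \<le> n"
  shows "coeff (f ^ n - f) k = - coeff f k"
proof -
  have "k < k * n"
    using assms(2,3) by simp
  then show ?thesis
    using coeff_power_eq_0_below[OF assms(1)] by simp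
qed

lemma monom_dvd_if_monom_dvd_power_minus_self:
  fixes f :: "'a::comm_ring_1 poly"
  assumes "coeff f 0 = 0" "2 \<le> n" "monom 1 k dvd f ^ n - f"
  shows "monom 1 k dvd f"
  using assms(3)
proof (induction k)
  case 0
  then show ?case
    by simp
next
  case (Suc k)
  have "monom 1 k dvd f ^ n - f"
    using Suc.prems by (simp add: monom_1_dvd_iff')
  then have IH: "monom 1 k dvd f"
    by (rule Suc.IH)
  have "coeff f k = 0"
  proof (cases "k = 0")
    case False
    have "coeff (f ^ n - f) k = 0"
      using Suc.prems by (simp add: monom_1_dvd_iff')
    then show ?thesis
      using coeff_power_minus_self[OF IH _ assms(2)] False by simp
  qed (use assms(1) in simp)
  with IH show ?case
    by (auto simp: monom_1_dvd_iff' less_Suc_eq)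
qed

lemma degree_power_minus_self:
  fixes f :: "'a::idom poly"
  assumes "0 < degree f" "2 \<le> n"
  shows "degree (f ^ n - f) = n * degree f"
proof -
  have deg: "degree (f ^ n) = n * degree f"
    using assms(1) by (intro degree_power_eq) auto
  moreover have "degree f < n * degree f"
    using assms by simp
  ultimately show ?thesis
    using degree_add_eq_left[of "- f" "f ^ n"] by simp
qed

lemma coeff_Phi_power:
  assumes "j \<le> 2 * m"
  shows "coeff (Phi m c) (CARD('a) ^ j) = (c j :: 'a::{finite,field})"
proof -
  have "coeff (Phi m c) (CARD('a) ^ j) = (\<Sum>i = 0..2 * m. if i = j then c i else 0)"
    unfolding Phi_def coeff_sum coeff_monom
    using two_le_card_field[where 'a='a] by (intro sum.cong) auto
  then show ?thesis
    using assms by simp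
qed

lemma coeff_Phi_0: "coeff (Phi m c) 0 = 0"
  by (simp add: Phi_def coeff_sum)

lemma degree_Phi:
  assumes "c (2 * m) \<noteq> 0"
  shows "degree (Phi m (c :: nat \<Rightarrow> 'a::{finite,field})) = CARD('a) ^ (2 * m)"
proof (rule antisym)
  show "degree (Phi m c) \<le> CARD('a) ^ (2 * m)"
    unfolding Phi_def
  proof (intro degree_sum_le)
    fix i assume "i \<in> {0..2 * m}"
    then have "CARD('a) ^ i \<le> CARD('a) ^ (2 * m)"
      using two_le_card_field[where 'a='a] by (intro power_increasing) auto
    then show "degree (monom (c i) (CARD('a) ^ i)) \<le> CARD('a) ^ (2 * m)"
      using degree_monom_le order.trans by blast
  qed simp
  show "CARD('a) ^ (2 * m) \<le> degree (Phi m c)"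
    using assms by (intro le_degree) (simp add: coeff_Phi_power)
qed

lemma degree_Phi_solution:
  fixes c :: "nat \<Rightarrow> 'a::{finite,field}"
  assumes "1 \<le> m" "c (2 * m) \<noteq> 0"
    and eq: "f ^ CARD('a) - f = monom 1 (CARD('a) ^ m) * Phi m c"
  shows "degree f = CARD('a) ^ (m - 1) * (CARD('a) ^ m + 1)"
proof -
  define q where "q = CARD('a)"
  have q: "2 \<le> q"
    unfolding q_def by (rule two_le_card_field)
  have "Phi m c \<noteq> 0"
    using coeff_Phi_power[of "2 * m" m c] assms(2) by auto
  then have rhs: "degree (f ^ q - f) = q ^ m + q ^ (2 * m)"
    using assms(2) by (simp add: eq q_def degree_mult_eq degree_monom_eq degree_Phi)
  have "0 < degree f"
  proof (rule ccontr)
    assume "\<not> 0 < degree f"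
    then obtain a where "f = [:a:]"
      by (metis degree_eq_zeroE gr0I)
    then show False
      using rhs q by (simp add: poly_const_pow)
  qed
  then have "q * degree f = q ^ m + q ^ (2 * m)"
    using degree_power_minus_self[of f q] rhs q by simp
  also have "\<dots> = q * (q ^ (m - 1) * (q ^ m + 1))"
  proof -
    have qm: "q * q ^ (m - 1) = q ^ m"
      using assms(1) by (cases m) simp_all
    show ?thesis
      unfolding mult_2 power_add qm[symmetric] by (simp add: algebra_simps)
  qed
  finally show ?thesis
    using q by (simp add: q_def)
qed

lemma monom_dvd_Phi_solution:
  fixes c :: "nat \<Rightarrow> 'a::{finite,field}"
  assumes "poly f 0 = 0"
    and eq: "f ^ CARD('a) - f = monom 1 (CARD('a) ^ m) * Phi m c"
  shows "monom 1 (CARD('a) ^ m + 1) dvd f"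
proof (rule monom_dvd_if_monom_dvd_power_minus_self)
  show "coeff f 0 = 0"
    using assms(1) by (simp add: poly_0_coeff_0)
  show "2 \<le> CARD('a)"
    by (rule two_le_card_field)
  show "monom 1 (CARD('a) ^ m + 1) dvd f ^ CARD('a) - f"
    unfolding eq monom_1_dvd_iff' by (auto simp: coeff_monom_mult coeff_Phi_0)
qed

lemma coeff_Phi_solution:
  fixes c :: "nat \<Rightarrow> 'a::{finite,field}"
  assumes "poly f 0 = 0"
    and eq: "f ^ CARD('a) - f = monom 1 (CARD('a) ^ m) * Phi m c"
  shows "coeff f (CARD('a) ^ m + 1) = - c 0"
proof -
  have "coeff (f ^ CARD('a) - f) (CARD('a) ^ m + 1) = - coeff f (CARD('a) ^ m + 1)"
    using coeff_power_minus_self[OF monom_dvd_Phi_solution[OF assms] _ two_le_card_field] by simp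
  moreover have "coeff (f ^ CARD('a) - f) (CARD('a) ^ m + 1) = c 0"
    using coeff_Phi_power[of 0 m c] by (simp add: eq coeff_monom_mult)
  ultimately show ?thesis
    by (metis minus_minus)
qed

lemma Phi_solution_factor:
  fixes c :: "nat \<Rightarrow> 'a::{finite,field}"
  assumes "1 \<le> m" "c (2 * m) \<noteq> 0" "poly f 0 = 0"
    and eq: "f ^ CARD('a) - f = monom 1 (CARD('a) ^ m) * Phi m c"
  obtains f1 where "f = monom 1 (CARD('a) ^ m + 1) * f1" "coeff f1 0 = - c 0"
    "lead_coeff f1 = lead_coeff f" "degree f1 = (CARD('a) ^ (m - 1) - 1) * (CARD('a) ^ m + 1)"
proof -
  obtain f1 where f1: "f = monom 1 (CARD('a) ^ m + 1) * f1"
    using monom_dvd_Phi_solution[OF assms(3) eq] by (elim dvdE)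
  have deg_f: "degree f = CARD('a) ^ (m - 1) * (CARD('a) ^ m + 1)"
    by (rule degree_Phi_solution[OF assms(1,2) eq])
  have "f1 \<noteq> 0"
  proof
    assume "f1 = 0"
    then have "degree f = 0"
      by (simp add: f1)
    with deg_f show False
      using two_le_card_field[where 'a='a] by simp
  qed
  then have "degree f = (CARD('a) ^ m + 1) + degree f1" and lc: "lead_coeff f1 = lead_coeff f"
    unfolding f1 by (simp_all add: degree_mult_eq degree_monom_eq coeff_monom_mult)
  then have "degree f1 = (CARD('a) ^ (m - 1) - 1) * (CARD('a) ^ m + 1)"
    using deg_f by (simp add: diff_mult_distrib)
  moreover have "coeff f1 0 = - c 0"
    using coeff_Phi_solution[OF assms(3) eq] by (simp add: f1 coeff_monom_mult)
  ultimately show ?thesis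
    using that[OF f1 _ lc] by simp
qed

section \<open>Factorization of L\<close>

lemma monic_irreducible_divisors_prod:
  fixes T :: "'a::field poly set"
  assumes "finite T" and T: "\<And>p. p \<in> T \<Longrightarrow> irreducible p \<and> lead_coeff p = 1"
  shows "{p. irreducible p \<and> lead_coeff p = 1 \<and> p dvd \<Prod>T} = T"
proof safe
  fix p assume p: "irreducible p" "lead_coeff p = 1" "p dvd \<Prod>T"
  have "prime_elem p"
    using p(1) by (rule field_poly_irreducible_imp_prime)
  then obtain x where x: "x \<in> T" "p dvd x"
    using p(3) assms(1) by (auto simp: prod_unfold_prod_mset elim: prime_elem_dvd_prod_msetE)
  then obtain r where r: "x = p * r"
    by (elim dvdE)
  then have "is_unit r"
    using T[OF x(1)] p(1) by (meson irreducibleD irreducible_not_unit)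
  then obtain r0 where r0: "r = [:r0:]"
    by (auto simp: is_unit_poly_iff)
  have "lead_coeff x = lead_coeff p * lead_coeff r"
    using r by (simp add: lead_coeff_mult)
  then have "r0 = 1"
    using T[OF x(1)] p(2) r0 by simp
  then have "x = p"
    using r r0 by simp
  with x show "p \<in> T"
    by simp
next
  fix x assume "x \<in> T"
  then show "irreducible x" "lead_coeff x = 1" "x dvd \<Prod>T"
    using T assms(1) by auto
qed

lemma Lpoly_factorization:
  fixes c :: "nat \<Rightarrow> 'a::{finite,field}"
  assumes "1 \<le> m" and eq: "f ^ CARD('a) - f = monom 1 (CARD('a) ^ m) * Phi m c"
  shows "monom 1 (CARD('a) ^ m) * Lpoly m c
    = (\<Prod>l\<in>UNIV. t_monom_plus (CARD('a) ^ m + CARD('a) ^ (m - 1)) (f + [:l:]))"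
proof -
  interpret F: finite_field_algebra "\<lambda>c::'a. [:const_emb c:]"
    using comm_ring_hom_comp[OF comm_ring_hom_const_poly const_emb.comm_ring_hom_axioms]
    by (simp add: finite_field_algebra_def o_def)
  interpret E: comm_ring_hom "map_poly const_emb"
    by (rule const_emb.comm_ring_hom_map_poly)
  define q where "q = CARD('a)"
  define N where "N = q ^ m + q ^ (m - 1)"
  define G where "G = t_monom_plus N f"
  have "(\<Prod>l\<in>UNIV. t_monom_plus N (f + [:l:])) = (\<Prod>l\<in>UNIV. G + [:const_emb l:])"
    by (simp add: G_def t_monom_plus_def E.hom_add map_poly_pCons add.assoc)
  also have "\<dots> = G ^ q - G"
    unfolding q_def by (rule F.prod_UNIV_plus_hom)
  also have "G ^ q = monom tvar N ^ q + map_poly const_emb (f ^ q)"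
    unfolding G_def t_monom_plus_def q_def by (simp add: F.add_power_card E.hom_power)
  also have "monom tvar N ^ q = monom (tvar ^ q) (q ^ (m + 1) + q ^ m)"
    using assms(1) by (cases m) (simp_all add: N_def monom_power algebra_simps)
  also have "monom (tvar ^ q) (q ^ (m + 1) + q ^ m) + map_poly const_emb (f ^ q) - G
      = monom (tvar ^ q) (q ^ (m + 1) + q ^ m) - monom tvar N + map_poly const_emb (f ^ q - f)"
    by (simp add: G_def t_monom_plus_def E.hom_diff)
  also have "map_poly const_emb (f ^ q - f) = monom 1 (q ^ m) * map_poly const_emb (Phi m c)"
    by (simp add: q_def eq E.hom_mult map_poly_monom)
  also have "monom (tvar ^ q) (q ^ (m + 1) + q ^ m) - monom tvar N + \<dots> = monom 1 (q ^ m) * Lpoly m c"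
    by (simp add: Lpoly_def q_def N_def algebra_simps mult_monom)
  finally show ?thesis
    by (simp add: q_def N_def)
qed

lemma t_monom_plus_translates:
  fixes f :: "'a::field poly"
  assumes "0 < N" "N < degree f" "lead_coeff f = 1" "coeff f 0 = 0"
  shows "l \<noteq> 0 \<Longrightarrow> irreducible (t_monom_plus N (f + [:l:]))"
    and "lead_coeff (t_monom_plus N (f + [:l:])) = 1"
    and "degree (t_monom_plus N (f + [:l:])) = degree f"
    and "inj (\<lambda>l. t_monom_plus N (f + [:l:]))"
proof -
  have fl: "degree (f + [:l:]) = degree f" "lead_coeff (f + [:l:]) = 1" "coeff (f + [:l:]) 0 = l" for l
    using assms(2-4) by (simp_all add: degree_add_eq_left coeff_pCons split: nat.split)
  then have N_less: "N < degree (f + [:l:])" for l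
    using assms(2) by simp
  show "l \<noteq> 0 \<Longrightarrow> irreducible (t_monom_plus N (f + [:l:]))"
    using irreducible_t_monom_plus[OF _ N_less] fl(3) by simp
  show "lead_coeff (t_monom_plus N (f + [:l:])) = 1"
    by (simp only: lead_coeff_t_monom_plus[OF N_less] fl(2) const_emb.hom_one)
  show "degree (t_monom_plus N (f + [:l:])) = degree f"
    by (simp only: degree_t_monom_plus[OF N_less] fl(1))
  show "inj (\<lambda>l. t_monom_plus N (f + [:l:]))"
  proof (rule injI)
    fix l l' assume "t_monom_plus N (f + [:l:]) = t_monom_plus N (f + [:l':])"
    then have "coeff (t_monom_plus N (f + [:l:])) 0 = coeff (t_monom_plus N (f + [:l':])) 0"
      by simp
    then show "l = l'"
      using assms(1,4) by (simp add: coeff_0_t_monom_plus)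
  qed
qed

lemma Lpoly_div_X_eq:
  fixes c :: "nat \<Rightarrow> 'a::{finite,field}"
  assumes "1 \<le> m" "f = monom 1 (CARD('a) ^ m + 1) * f1"
    and eq: "f ^ CARD('a) - f = monom 1 (CARD('a) ^ m) * Phi m c"
  shows "Lpoly m c div [:0, 1:] = t_monom_plus (CARD('a) ^ (m - 1) - 1) f1
    * (\<Prod>l\<in>UNIV - {0}. t_monom_plus (CARD('a) ^ m + CARD('a) ^ (m - 1)) (f + [:l:]))"
proof -
  define q where "q = CARD('a)"
  define G where "G l = t_monom_plus (q ^ m + q ^ (m - 1)) (f + [:l:])" for l
  define H where "H = t_monom_plus (q ^ (m - 1) - 1) f1"
  have "monom 1 (q ^ m) * Lpoly m c = G 0 * (\<Prod>l\<in>UNIV - {0}. G l)"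
    using Lpoly_factorization[OF assms(1) eq] prod.remove[of UNIV 0 G] by (simp add: G_def q_def)
  also have "G 0 = t_monom_plus ((q ^ m + 1) + (q ^ (m - 1) - 1)) (monom 1 (q ^ m + 1) * f1)"
    using two_le_card_field[where 'a='a] by (simp add: G_def assms(2) q_def)
  also have "\<dots> = monom 1 (q ^ m + 1) * H"
    by (simp only: H_def monom_mult_t_monom_plus)
  also have "\<dots> = monom 1 (q ^ m) * ([:0, 1:] * H)"
    by (simp add: monom_Suc)
  finally have "monom 1 (q ^ m) * Lpoly m c = monom 1 (q ^ m) * ([:0, 1:] * (H * (\<Prod>l\<in>UNIV - {0}. G l)))"
    by (simp only: mult.assoc)
  then have "Lpoly m c = [:0, 1:] * (H * (\<Prod>l\<in>UNIV - {0}. G l))"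
    by (subst (asm) mult_left_cancel) simp_all
  then have "Lpoly m c div [:0, 1:] = H * (\<Prod>l\<in>UNIV - {0}. G l)"
    by (metis nonzero_mult_div_cancel_left pCons_eq_0_iff one_neq_zero)
  then show ?thesis
    by (simp only: G_def H_def q_def)
qed

lemma Lpoly_translate_factors:
  fixes c :: "nat \<Rightarrow> 'a::{finite,field}"
  assumes "2 \<le> m" "c (2 * m) = 1" "lead_coeff f = 1" "poly f 0 = 0"
    and eq: "f ^ CARD('a) - f = monom 1 (CARD('a) ^ m) * Phi m c"
  defines "G \<equiv> \<lambda>l. t_monom_plus (CARD('a) ^ m + CARD('a) ^ (m - 1)) (f + [:l:])"
  shows "l \<noteq> 0 \<Longrightarrow> irreducible (G l)" "lead_coeff (G l) = 1"
    "degree (G l) = CARD('a) ^ (m - 1) * (CARD('a) ^ m + 1)" "inj G"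
proof -
  define q where "q = CARD('a)"
  have "q ^ 1 < q ^ m"
    using two_le_card_field[where 'a='a] assms(1) by (intro power_strict_increasing) (auto simp: q_def)
  then have "q ^ m + q ^ (m - 1) < q ^ (m - 1) * (q ^ m + 1)"
    using assms(1) by (cases m) (simp_all add: algebra_simps)
  moreover have "degree f = q ^ (m - 1) * (q ^ m + 1)"
    unfolding q_def using assms(1,2) by (intro degree_Phi_solution[OF _ _ eq]) simp_all
  moreover have "coeff f 0 = 0"
    using assms(4) by (simp add: poly_0_coeff_0)
  ultimately show "l \<noteq> 0 \<Longrightarrow> irreducible (G l)" "lead_coeff (G l) = 1"
    "degree (G l) = CARD('a) ^ (m - 1) * (CARD('a) ^ m + 1)" "inj G"
    using t_monom_plus_translates[of "q ^ m + q ^ (m - 1)" f] assms(3) by (simp_all add: G_def q_def)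
qed

lemma Lpoly_exceptional_factor:
  fixes c :: "nat \<Rightarrow> 'a::{finite,field}"
  assumes "2 \<le> m" "c (2 * m) = 1" "c 0 = -1" "lead_coeff f = 1" "poly f 0 = 0"
    and eq: "f ^ CARD('a) - f = monom 1 (CARD('a) ^ m) * Phi m c"
  obtains f1 where "f = monom 1 (CARD('a) ^ m + 1) * f1"
    and "irreducible (t_monom_plus (CARD('a) ^ (m - 1) - 1) f1)"
      "lead_coeff (t_monom_plus (CARD('a) ^ (m - 1) - 1) f1) = 1"
      "degree (t_monom_plus (CARD('a) ^ (m - 1) - 1) f1) = (CARD('a) ^ (m - 1) - 1) * (CARD('a) ^ m + 1)"
proof -
  define q where "q = CARD('a)"
  have m1: "1 \<le> m" and c2m: "c (2 * m) \<noteq> 0"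
    using assms(1,2) by simp_all
  obtain f1 where f1: "f = monom 1 (q ^ m + 1) * f1" "coeff f1 0 = - c 0"
    "lead_coeff f1 = lead_coeff f" "degree f1 = (q ^ (m - 1) - 1) * (q ^ m + 1)"
    unfolding q_def by (rule Phi_solution_factor[OF m1 c2m assms(5) eq])
  have "q ^ 1 \<le> q ^ (m - 1)"
    using two_le_card_field[where 'a='a] assms(1) by (intro power_increasing) (auto simp: q_def)
  then have "(q ^ (m - 1) - 1) * 1 < (q ^ (m - 1) - 1) * (q ^ m + 1)"
    using two_le_card_field[where 'a='a] by (intro mult_strict_left_mono) (simp_all add: q_def)
  then have "q ^ (m - 1) - 1 < degree f1"
    by (simp only: f1(4) mult_1_right)
  moreover have "coeff f1 0 \<noteq> 0" "lead_coeff f1 = 1"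
    using f1(2,3) assms(3,4) by simp_all
  ultimately show ?thesis
    using that[OF f1(1)[unfolded q_def]] monic_irreducible_t_monom_plus[of f1] f1(4)
    by (simp add: q_def)
qed

lemma Lpoly_div_X_factors:
  fixes c :: "nat \<Rightarrow> 'a::{finite,field}"
  assumes "2 \<le> m" "c (2 * m) = 1" "c 0 = -1" "lead_coeff f = 1" "poly f 0 = 0"
    and eq: "f ^ CARD('a) - f = monom 1 (CARD('a) ^ m) * Phi m c"
  obtains H and G :: "'a \<Rightarrow> 'a poly fract poly"
  where "{p. irreducible p \<and> lead_coeff p = 1 \<and> p dvd Lpoly m c div [:0, 1:]}
      = insert H (G ` (UNIV - {0}))"
    and "H \<notin> G ` (UNIV - {0})" "inj G"
    and "degree H = (CARD('a) ^ (m - 1) - 1) * (CARD('a) ^ m + 1)"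
    and "\<And>l. degree (G l) = CARD('a) ^ (m - 1) * (CARD('a) ^ m + 1)"
proof -
  obtain f1 where f1: "f = monom 1 (CARD('a) ^ m + 1) * f1"
    and H: "irreducible (t_monom_plus (CARD('a) ^ (m - 1) - 1) f1)"
      "lead_coeff (t_monom_plus (CARD('a) ^ (m - 1) - 1) f1) = 1"
      "degree (t_monom_plus (CARD('a) ^ (m - 1) - 1) f1) = (CARD('a) ^ (m - 1) - 1) * (CARD('a) ^ m + 1)"
    by (rule Lpoly_exceptional_factor[OF assms])
  define H where "H = t_monom_plus (CARD('a) ^ (m - 1) - 1) f1"
  define G where "G = (\<lambda>l. t_monom_plus (CARD('a) ^ m + CARD('a) ^ (m - 1)) (f + [:l:]))"
  have G: "l \<noteq> 0 \<Longrightarrow> irreducible (G l)" "lead_coeff (G l) = 1"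
    "degree (G l) = CARD('a) ^ (m - 1) * (CARD('a) ^ m + 1)" "inj G" for l
    unfolding G_def using Lpoly_translate_factors[OF assms(1,2,4,5) eq] by blast+
  note H = H[folded H_def]
  have "(CARD('a) ^ (m - 1) - 1) * (CARD('a) ^ m + 1) < CARD('a) ^ (m - 1) * (CARD('a) ^ m + 1)"
    using two_le_card_field[where 'a='a] by (intro mult_strict_right_mono) auto
  then have H_notin: "H \<notin> G ` (UNIV - {0})"
    using H(3) G(3) by auto
  have "Lpoly m c div [:0, 1:] = H * (\<Prod>l\<in>UNIV - {0}. G l)"
    unfolding H_def G_def using Lpoly_div_X_eq[OF _ f1 eq] assms(1) by simp
  then have "\<Prod>(insert H (G ` (UNIV - {0}))) = Lpoly m c div [:0, 1:]"
    using H_notin G(4) by (simp add: prod.reindex inj_on_subset)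
  moreover have "p \<in> insert H (G ` (UNIV - {0})) \<Longrightarrow> irreducible p \<and> lead_coeff p = 1" for p
    using H(1,2) G(1,2) by auto
  ultimately have "{p. irreducible p \<and> lead_coeff p = 1 \<and> p dvd Lpoly m c div [:0, 1:]}
      = insert H (G ` (UNIV - {0}))"
    using monic_irreducible_divisors_prod[of "insert H (G ` (UNIV - {0}))"] by simp
  with H_notin G(3,4) H(3) show ?thesis
    using that by blast
qed

theorem corollary4p6:
  fixes c :: "nat \<Rightarrow> 'a::{finite,field}" and m :: nat and f :: "'a poly"
  assumes "m \<ge> 2"
    and "c (2*m) = 1"
    and "\<forall>i \<le> m. c i = - c (2*m - i)"
    and "c m = 0"
    and "lead_coeff f = 1" and "poly f 0 = 0"
    and "f ^ CARD('a) - f = monom 1 (CARD('a) ^ m) * Phi m c"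
  shows "(monom 1 (CARD('a) ^ m) * Lpoly m c =
           (\<Prod>l\<in>(UNIV :: 'a set).
              monom tvar (CARD('a) ^ m + CARD('a) ^ (m - 1))
              + map_poly const_emb f + [:const_emb l:]))
    \<and> (let P = Lpoly m c div [:0, 1:];
             S = {p. irreducible p \<and> lead_coeff p = 1 \<and> p dvd P}
         in card S = CARD('a)
            \<and> card {p \<in> S. degree p = (CARD('a) ^ (m - 1) - 1) * (CARD('a) ^ m + 1)} = 1
            \<and> card {p \<in> S. degree p = CARD('a) ^ (m - 1) * (CARD('a) ^ m + 1)} = CARD('a) - 1)"
proof -
  have c0: "c 0 = -1"
    using assms(3)[rule_format, of 0] assms(2) by simp
  define dH where "dH = (CARD('a) ^ (m - 1) - 1) * (CARD('a) ^ m + 1)"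
  define dG where "dG = CARD('a) ^ (m - 1) * (CARD('a) ^ m + 1)"
  obtain H and G :: "'a \<Rightarrow> 'a poly fract poly"
    where S: "{p. irreducible p \<and> lead_coeff p = 1 \<and> p dvd Lpoly m c div [:0, 1:]}
      = insert H (G ` (UNIV - {0}))"
    and "H \<notin> G ` (UNIV - {0})" "inj G" "degree H = dH" "\<And>l. degree (G l) = dG"
    using Lpoly_div_X_factors[OF assms(1,2) c0 assms(5-7)] unfolding dH_def dG_def by blast
  moreover have "dH < dG"
    unfolding dH_def dG_def using two_le_card_field[where 'a='a] by (intro mult_strict_right_mono) auto
  ultimately have "card (insert H (G ` (UNIV - {0}))) = CARD('a)"
    and "{p \<in> insert H (G ` (UNIV - {0})). degree p = dH} = {H}"
    and "{p \<in> insert H (G ` (UNIV - {0})). degree p = dG} = G ` (UNIV - {0})"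
    and "card (G ` (UNIV - {0})) = CARD('a) - 1"
    using two_le_card_field[where 'a='a]
    by (auto simp: card_image inj_on_subset card_Diff_singleton)
  moreover have "monom 1 (CARD('a) ^ m) * Lpoly m c = (\<Prod>l\<in>UNIV.
      monom tvar (CARD('a) ^ m + CARD('a) ^ (m - 1)) + map_poly const_emb f + [:const_emb l:])"
    using Lpoly_factorization[OF _ assms(7)] assms(1)
    by (simp add: t_monom_plus_def const_emb.map_poly_hom_add map_poly_pCons add.assoc)
  ultimately show ?thesis
    unfolding Let_def S dH_def[symmetric] dG_def[symmetric] by simp
qed

end
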